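(* Let $d\ge3$ and $p\colon S^{d-1}\to(0,\infty)$ Borel measurable with $\int_{S^{d-1}}p\,d\sigma_{d-1}\in(0,\infty)$. For $x\in S^{d-1}$ and $t\in(0,\|p\|_\infty)$ define $V(x,t):=\{v\in S^{d-2}_x:\lambda_1(L(x,v,t))>0\}$. Then for $\sigma_{d-1}$-almost every $x\in S^{d-1}$, $$\frac1{p(x)}\,\lambda_1\Big(\Big\{t\in(0,p(x)) : \tfrac{1}{\omega_{d-2}}\mu_x(V(x,t))=1\Big\}\Big)=1.$$
   Context: $S^{d-1}$ is the unit sphere in $\mathbb R^d$, $\sigma_{d-1}$ its volume measure, $\omega_{d-2}=\sigma_{d-2}(S^{d-2})$. $\|p\|_\infty$ is the $\sigma_{d-1}$-essential supremum of $p$ (possibly $+\infty$). For $x\in S^{d-1}$: $S^{d-2}_x:=\{v\in S^{d-1}:\langle v,x\rangle=0\}$ with natural volume measure $\mu_x$ (image of $\sigma_{d-2}$ under a linear isometry of $\mathbb R^{d-1}$ onto $x^\perp$; total mass $\omega_{d-2}$). $\gamma_{(x,v)}(\theta):=\cos(\theta)x+\sin(\theta)v$, $L(x,v,t):=\{\theta\in[0,2\pi):p(\gamma_{(x,v)}(\theta))>t\}$, and $\lambda_1$ is Lebesgue measure on $\mathbb R$. *)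

theory Defs
  imports "HOL-Probability.Probability"
begin

text \<open>Surface (volume) measure on the unit sphere of a Euclidean space, defined as the
  cone measure: sigma(A) = DIM * lambda_d({r y | 0 < r <= 1, y in A}).\<close>
definition sphere_measure :: "'a::euclidean_space measure" where
  "sphere_measure =
     scale_measure (of_nat DIM('a))
       (distr (restrict_space lborel (cball 0 1 - {0}))
              (restrict_space borel (sphere 0 1))
              (\<lambda>z. z /\<^sub>R norm z))"

definition sphere_volume :: "'a::euclidean_space itself \<Rightarrow> real" where
  "sphere_volume _ = measure (sphere_measure :: 'a measure) (sphere 0 1)"

definition perp_isometry :: "'n::euclidean_space \<Rightarrow> 'm::euclidean_space \<Rightarrow> 'n" where
  "perp_isometry x = (SOME f. linear f \<and> (\<forall>v. norm (f v) = norm v)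
                                \<and> range f = {v. x \<bullet> v = 0})"

definition perp_sphere_measure :: "'m::euclidean_space itself \<Rightarrow> 'n::euclidean_space \<Rightarrow> 'n measure" where
  "perp_sphere_measure _ x =
     distr (sphere_measure :: 'm measure) borel (perp_isometry x :: 'm \<Rightarrow> 'n)"

definition great_circle :: "'n::real_normed_vector \<Rightarrow> 'n \<Rightarrow> real \<Rightarrow> 'n" where
  "great_circle x v \<theta> = cos \<theta> *\<^sub>R x + sin \<theta> *\<^sub>R v"

definition Lset :: "('n::real_normed_vector \<Rightarrow> real) \<Rightarrow> 'n \<Rightarrow> 'n \<Rightarrow> real \<Rightarrow> real set" where
  "Lset p x v t = {\<theta> \<in> {0..<2*pi}. p (great_circle x v \<theta>) > t}"

definition Vset :: "('n::euclidean_space \<Rightarrow> real) \<Rightarrow> 'n \<Rightarrow> real \<Rightarrow> 'n set" where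
  "Vset p x t = {v \<in> sphere 0 1. x \<bullet> v = 0 \<and> emeasure lborel (Lset p x v t) > 0}"

end

theory Submission
  imports Defs
begin

text \<open>
  Fix t and let K be the cone over the superlevel set {p > t} of the sphere. Call y and z
  plane-null if the plane they span meets K in a set of planar measure zero. For y \<noteq> 0, a
  point z \<in> K plane-null with y lies on a line parallel to y that meets K in a null set, so by
  Fubini over the hyperplane orthogonal to y almost no z \<in> K is plane-null with y. The relation
  is symmetric, so Fubini on R^d \<times> R^d shows that for almost every y \<in> K the points plane-null
  with y form a null set; by dilation invariance the same holds for almost every direction x
  with p x > t, and, taking t rational, for all such t at once. For such x and t < t' < p x,
  a further Fubini argument in the orthogonal complement of x shows that for almost every unit
  v \<perp> x the plane spanned by x and v meets the cone over {p > t'} in positive measure. In polar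
  coordinates this says that the great circle through x and v spends positive time in
  {p > t'}, hence v \<in> V(x,t), and so mu_x(V(x,t)) = omega_(d-2) for every t < p x.
\<close>

lemma negligible_if_null_sets_lborel: "S \<in> null_sets lborel \<Longrightarrow> negligible S"
  by (simp add: negligible_iff_null_sets null_sets_completionI)

lemma emeasure_lborel_eq_0_if_negligible:
  "negligible T \<Longrightarrow> S \<subseteq> T \<Longrightarrow> S \<in> sets borel \<Longrightarrow> emeasure lborel S = 0"
  by (metis negligible_iff_null_sets negligible_subset null_sets_completion_iff sets_lborel
      null_setsD1)

lemma emeasure_lborel_eq_0_if_subset_linear_image:
  fixes f :: "'a::euclidean_space \<Rightarrow> 'b::euclidean_space"
  assumes "S \<in> null_sets lborel" "linear f" "DIM('a) \<le> DIM('b)"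
    and "T \<subseteq> f ` S" "T \<in> sets borel"
  shows "emeasure lborel T = 0"
proof -
  have "negligible (f ` S)"
    using assms(1-3) by (intro negligible_differentiable_image_negligible
        negligible_if_null_sets_lborel linear_imp_differentiable_on)
  with assms(4,5) show ?thesis using emeasure_lborel_eq_0_if_negligible by blast
qed

definition dilation_invariant :: "'a::real_vector set \<Rightarrow> bool" where
  "dilation_invariant K \<longleftrightarrow> (\<forall>c>0. \<forall>y. c *\<^sub>R y \<in> K \<longleftrightarrow> y \<in> K)"

definition plane_null :: "'a::euclidean_space set \<Rightarrow> 'a \<Rightarrow> 'a \<Rightarrow> bool" where
  "plane_null K y z \<longleftrightarrow>
     emeasure (lborel :: (real \<times> real) measure) {ab. fst ab *\<^sub>R y + snd ab *\<^sub>R z \<in> K} = 0"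

lemma continuous_preimage_borel:
  assumes "continuous_on UNIV g" "S \<in> sets borel"
  shows "{v. g v \<in> S} \<in> sets borel"
  using measurable_sets[OF borel_measurable_continuous_onI[OF assms(1)] assms(2)]
  by (simp add: vimage_def)

lemma plane_coefficients_borel:
  fixes y z :: "'a::euclidean_space"
  shows "K \<in> sets borel \<Longrightarrow> {ab :: real \<times> real. fst ab *\<^sub>R y + snd ab *\<^sub>R z \<in> K} \<in> sets borel"
  by (rule continuous_preimage_borel) (intro continuous_intros)

lemma plane_null_change_basis:
  fixes y z :: "'a::euclidean_space"
  assumes K: "K \<in> sets borel" and N: "plane_null K y z" and det: "\<alpha> * \<delta> - \<beta> * \<gamma> \<noteq> 0"
  shows "plane_null K (\<alpha> *\<^sub>R y + \<beta> *\<^sub>R z) (\<gamma> *\<^sub>R y + \<delta> *\<^sub>R z)"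
proof -
  let ?Q = "{ab :: real \<times> real. fst ab *\<^sub>R y + snd ab *\<^sub>R z \<in> K}"
  let ?D = "\<alpha> * \<delta> - \<beta> * \<gamma>"
  define M where "M = (\<lambda>(c::real, d::real). ((c * \<delta> - d * \<gamma>) / ?D, (d * \<alpha> - c * \<beta>) / ?D))"
  have lin: "linear M"
    unfolding M_def by (rule linearI) (auto simp: algebra_simps add_divide_distrib diff_divide_distrib)
  have null: "?Q \<in> null_sets lborel"
    using N plane_coefficients_borel[OF K] unfolding plane_null_def by (auto simp: null_sets_def)
  have sub: "{ab. fst ab *\<^sub>R (\<alpha> *\<^sub>R y + \<beta> *\<^sub>R z) + snd ab *\<^sub>R (\<gamma> *\<^sub>R y + \<delta> *\<^sub>R z) \<in> K} \<subseteq> M ` ?Q"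
  proof
    fix ab :: "real \<times> real"
    let ?c = "fst ab * \<alpha> + snd ab * \<gamma>" and ?d = "fst ab * \<beta> + snd ab * \<delta>"
    assume "ab \<in> {ab. fst ab *\<^sub>R (\<alpha> *\<^sub>R y + \<beta> *\<^sub>R z) + snd ab *\<^sub>R (\<gamma> *\<^sub>R y + \<delta> *\<^sub>R z) \<in> K}"
    then have "(?c, ?d) \<in> ?Q"
      by (simp add: algebra_simps)
    moreover have "ab = M (?c, ?d)"
      using det unfolding M_def by (cases ab) (auto simp: field_simps)
    ultimately show "ab \<in> M ` ?Q" by (rule rev_image_eqI)
  qed
  show ?thesis
    unfolding plane_null_def
    using emeasure_lborel_eq_0_if_subset_linear_image[OF null lin _ sub plane_coefficients_borel[OF K]]
    by simp
qed

lemma plane_null_commute: "K \<in> sets borel \<Longrightarrow> plane_null K y z \<Longrightarrow> plane_null K z y"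
  using plane_null_change_basis[where \<alpha> = 0 and \<beta> = 1 and \<gamma> = 1 and \<delta> = 0] by simp

lemma plane_null_scaleR_left_iff:
  assumes K: "K \<in> sets borel" and c: "c \<noteq> 0"
  shows "plane_null K (c *\<^sub>R y) z \<longleftrightarrow> plane_null K y z"
proof -
  have scale: "plane_null K (d *\<^sub>R w) z" if "plane_null K w z" "d \<noteq> 0" for d w
    using plane_null_change_basis[OF K that(1), where \<alpha> = d and \<beta> = 0 and \<gamma> = 0 and \<delta> = 1] that(2) by simp
  have "inverse c *\<^sub>R c *\<^sub>R y = y"
    using c by simp
  then show ?thesis
    using scale[of "c *\<^sub>R y" "inverse c"] scale[of y c] c by auto
qed

lemma plane_null_scaleR_right_iff:
  assumes "K \<in> sets borel" "c \<noteq> 0"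
  shows "plane_null K y (c *\<^sub>R z) \<longleftrightarrow> plane_null K y z"
  using plane_null_scaleR_left_iff[OF assms] plane_null_commute[OF assms(1)] by metis

lemma sets_borel_pair_lborel:
  "sets (borel \<Otimes>\<^sub>M lborel) = sets (borel :: ('a::euclidean_space \<times> 'b::euclidean_space) measure)"
  by (metis borel_prod sets_lborel sets_pair_measure_cong)

lemma borel_plane_null_pairs:
  fixes K :: "'a::euclidean_space set"
  assumes K: "K \<in> sets borel"
  shows "{yz :: 'a \<times> 'a. plane_null K (fst yz) (snd yz)} \<in> sets borel"
proof -
  let ?Q = "{pq :: ('a \<times> 'a) \<times> (real \<times> real).
              fst (snd pq) *\<^sub>R fst (fst pq) + snd (snd pq) *\<^sub>R snd (fst pq) \<in> K}"
  have "?Q \<in> sets (borel \<Otimes>\<^sub>M lborel)"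
    unfolding sets_borel_pair_lborel
    by (rule continuous_preimage_borel[OF _ K]) (intro continuous_intros)
  from lborel.measurable_emeasure_Pair[OF this]
  have "(\<lambda>yz. emeasure lborel (Pair yz -` ?Q)) \<in> borel_measurable borel" .
  from measurable_sets[OF this, of "{0}"]
  show ?thesis
    by (simp add: plane_null_def vimage_def)
qed

lemma borel_plane_null_slice:
  fixes K :: "'a::euclidean_space set"
  assumes K: "K \<in> sets borel"
  shows "{z. plane_null K y z} \<in> sets borel"
proof -
  have "continuous_on UNIV (\<lambda>z :: 'a. (y, z))"
    by (intro continuous_intros)
  from continuous_preimage_borel[OF this borel_plane_null_pairs[OF K]] show ?thesis
    by simp
qed

lemma borel_measurable_emeasure_plane_null:
  fixes K :: "'a::euclidean_space set"
  assumes K: "K \<in> sets borel"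
  shows "(\<lambda>y. emeasure lborel {z. plane_null K y z}) \<in> borel_measurable borel"
proof -
  have "{yz :: 'a \<times> 'a. plane_null K (fst yz) (snd yz)} \<in> sets (borel \<Otimes>\<^sub>M lborel)"
    using borel_plane_null_pairs[OF K] by (simp only: sets_borel_pair_lborel)
  from lborel.measurable_emeasure_Pair[OF this] show ?thesis
    by (simp add: vimage_def)
qed

lemma borel_plane_null_non_null:
  fixes K :: "'a::euclidean_space set"
  assumes K: "K \<in> sets borel"
  shows "{y. {z. plane_null K y z} \<notin> null_sets lborel} \<in> sets borel"
proof -
  have "{y. {z. plane_null K y z} \<notin> null_sets lborel} = {y. emeasure lborel {z. plane_null K y z} \<noteq> 0}"
    using borel_plane_null_slice[OF K] by (simp add: null_sets_def)
  also have "\<dots> \<in> sets borel"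
    using measurable_sets[OF borel_measurable_emeasure_plane_null[OF K], of "- {0}"]
    by (simp add: vimage_def)
  finally show ?thesis .
qed

lemma line_null_if_plane_null:
  fixes u x :: "'a::euclidean_space"
  assumes K: "K \<in> sets borel" and D: "dilation_invariant K" and N: "plane_null K u x"
  shows "emeasure lborel {a :: real. u + a *\<^sub>R x \<in> K} = 0"
proof (rule ccontr)
  let ?Q = "{ab :: real \<times> real. fst ab *\<^sub>R u + snd ab *\<^sub>R x \<in> K}"
  let ?L = "{a :: real. u + a *\<^sub>R x \<in> K}"
  assume L: "emeasure lborel ?L \<noteq> 0"
  have Q: "?Q \<in> sets (lborel \<Otimes>\<^sub>M lborel)"
    using plane_coefficients_borel[OF K] by (simp only: lborel_prod sets_lborel)
  have "emeasure (lborel \<Otimes>\<^sub>M lborel) ?Q = 0"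
    using N by (simp add: plane_null_def lborel_prod)
  then have "AE b in lborel. emeasure lborel (Pair b -` ?Q) = 0"
    using lborel.emeasure_pair_measure_alt[OF Q]
      nn_integral_0_iff_AE[OF lborel.measurable_emeasure_Pair[OF Q]]
    by simp
  \<comment> \<open>for b > 0 the slice of the plane at first coordinate b is the line dilated by b\<close>
  moreover have "emeasure lborel (Pair b -` ?Q) \<noteq> 0" if "0 < b" for b
  proof
    assume "emeasure lborel (Pair b -` ?Q) = 0"
    then have "Pair b -` ?Q \<in> null_sets lborel"
      using sets_Pair1[OF Q] by (rule null_setsI)
    moreover have "linear (\<lambda>a :: real. a / b)"
      by (rule linearI) (auto simp: add_divide_distrib)
    moreover have "?L \<subseteq> (\<lambda>a. a / b) ` (Pair b -` ?Q)"
    proof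
      fix a assume "a \<in> ?L"
      then have "b *\<^sub>R (u + a *\<^sub>R x) \<in> K"
        using D \<open>0 < b\<close> unfolding dilation_invariant_def by blast
      then have "b * a \<in> Pair b -` ?Q"
        by (simp add: algebra_simps)
      then show "a \<in> (\<lambda>a. a / b) ` (Pair b -` ?Q)"
        using \<open>0 < b\<close> by (intro rev_image_eqI[of "b * a"]) auto
    qed
    moreover have "?L \<in> sets borel"
      by (rule continuous_preimage_borel[OF _ K]) (intro continuous_intros)
    ultimately have "emeasure lborel ?L = 0"
      using emeasure_lborel_eq_0_if_subset_linear_image by blast
    with L show False ..
  qed
  ultimately have "AE b in lborel. b \<in> {.. 0 :: real}"
    by (elim eventually_mono) (force simp: not_less)
  then have "{0 <.. 1} \<in> null_sets (lborel :: real measure)"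
    by (subst AE_iff_null_sets) (auto elim: eventually_mono)
  then show False
    by (simp add: null_sets_def)
qed

lemma polar_coordinates_2pi:
  fixes a b :: real
  assumes "(a, b) \<noteq> 0"
  obtains r \<theta> where "0 < r" "0 \<le> \<theta>" "\<theta> < 2*pi" "a = r * cos \<theta>" "b = r * sin \<theta>"
proof -
  define r where "r = sqrt (a\<^sup>2 + b\<^sup>2)"
  have pos: "a\<^sup>2 + b\<^sup>2 > 0"
    using assms by (auto simp: sum_power2_gt_zero_iff zero_prod_def)
  then have r: "0 < r" "r\<^sup>2 = a\<^sup>2 + b\<^sup>2"
    by (simp_all add: r_def)
  have "(a / r)\<^sup>2 + (b / r)\<^sup>2 = (a\<^sup>2 + b\<^sup>2) / r\<^sup>2"
    by (simp add: power_divide add_divide_distrib)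
  also have "\<dots> = 1"
    using pos r(2) by (metis div_self less_irrefl)
  finally have "(a / r)\<^sup>2 + (b / r)\<^sup>2 = 1" .
  then obtain \<theta> where "0 \<le> \<theta>" "\<theta> < 2*pi" "a / r = cos \<theta>" "b / r = sin \<theta>"
    by (rule sincos_total_2pi)
  with r show thesis
    by (intro that[of r \<theta>]) (auto simp: field_simps)
qed

lemma plane_null_if_arc_null:
  fixes x u :: "'a::euclidean_space"
  assumes K: "K \<in> sets borel" and D: "dilation_invariant K" and K0: "0 \<notin> K"
    and L: "emeasure lborel {\<theta> \<in> {0..<2*pi}. cos \<theta> *\<^sub>R x + sin \<theta> *\<^sub>R u \<in> K} = 0"
  shows "plane_null K x u"
proof -
  let ?L = "{\<theta> \<in> {0..<2*pi}. cos \<theta> *\<^sub>R x + sin \<theta> *\<^sub>R u \<in> K}"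
  define polar where "polar = (\<lambda>p :: real \<times> real. (fst p * cos (snd p), fst p * sin (snd p)))"
  have "?L = {0..<2*pi} \<inter> {\<theta>. cos \<theta> *\<^sub>R x + sin \<theta> *\<^sub>R u \<in> K}"
    by auto
  also have "\<dots> \<in> sets borel"
    by (intro sets.Int continuous_preimage_borel[OF _ K] continuous_intros) auto
  finally have "{0 :: real <..} \<times> ?L \<in> null_sets (lborel \<Otimes>\<^sub>M lborel)"
    using L by (intro lborel.times_in_null_sets2) (auto simp: null_sets_def)
  then have "negligible ({0 :: real <..} \<times> ?L)"
    by (intro negligible_if_null_sets_lborel) (simp add: lborel_prod)
  moreover have "polar differentiable_on ({0 :: real <..} \<times> ?L)"
    unfolding polar_def differentiable_on_def differentiable_def
    by (auto intro!: derivative_eq_intros)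
  ultimately have "negligible (polar ` ({0 :: real <..} \<times> ?L))"
    by (rule negligible_differentiable_image_negligible[OF order_refl])
  moreover have "{ab. fst ab *\<^sub>R x + snd ab *\<^sub>R u \<in> K} \<subseteq> polar ` ({0 :: real <..} \<times> ?L)"
  proof
    fix ab :: "real \<times> real"
    assume "ab \<in> {ab. fst ab *\<^sub>R x + snd ab *\<^sub>R u \<in> K}"
    then obtain a b where ab_def: "ab = (a, b)" and inK: "a *\<^sub>R x + b *\<^sub>R u \<in> K"
      by (cases ab) auto
    then have "(a, b) \<noteq> 0"
      using K0 by (auto simp: zero_prod_def)
    then obtain r \<theta> where r: "0 < r" and \<theta>: "0 \<le> \<theta>" "\<theta> < 2*pi"
      and ab: "a = r * cos \<theta>" "b = r * sin \<theta>"
      by (rule polar_coordinates_2pi)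
    then have "r *\<^sub>R (cos \<theta> *\<^sub>R x + sin \<theta> *\<^sub>R u) \<in> K"
      using inK by (simp add: scaleR_add_right)
    then have "\<theta> \<in> ?L"
      using D r \<theta> unfolding dilation_invariant_def by auto
    with r ab ab_def show "ab \<in> polar ` ({0 <..} \<times> ?L)"
      by (intro rev_image_eqI[of "(r, \<theta>)"]) (auto simp: polar_def)
  qed
  ultimately show ?thesis
    unfolding plane_null_def
    using emeasure_lborel_eq_0_if_negligible plane_coefficients_borel[OF K] by blast
qed

lemma perp_isometry_spec:
  fixes x :: "'n::euclidean_space"
  assumes "x \<noteq> 0" and "DIM('n) = DIM('m::euclidean_space) + 1"
  shows "linear (perp_isometry x :: 'm \<Rightarrow> 'n)"
    and "norm (perp_isometry x v :: 'n) = norm (v :: 'm)"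
    and "range (perp_isometry x :: 'm \<Rightarrow> 'n) = {v. x \<bullet> v = 0}"
proof -
  have "dim (UNIV :: 'm set) = dim {v. x \<bullet> v = 0}"
    using dim_hyperplane[OF assms(1)] assms(2) by (simp add: dim_UNIV)
  then obtain f :: "'m \<Rightarrow> 'n"
    where "linear f" "f ` UNIV = {v. x \<bullet> v = 0}" "\<And>v. v \<in> UNIV \<Longrightarrow> norm (f v) = norm v"
    using isometry_subspaces[OF subspace_UNIV subspace_hyperplane] by metis
  then have "\<exists>f :: 'm \<Rightarrow> 'n. linear f \<and> (\<forall>v. norm (f v) = norm v) \<and> range f = {v. x \<bullet> v = 0}"
    by blast
  from someI_ex[OF this] show "linear (perp_isometry x :: 'm \<Rightarrow> 'n)"
    and "norm (perp_isometry x v :: 'n) = norm v" and "range (perp_isometry x :: 'm \<Rightarrow> 'n) = {v. x \<bullet> v = 0}"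
    unfolding perp_isometry_def by blast+
qed

lemma perp_isometry_decomposition:
  fixes x :: "'n::euclidean_space"
  assumes x: "norm x = 1" and dims: "DIM('n) = DIM('m::euclidean_space) + 1"
  obtains w :: "'m::euclidean_space" where "z = perp_isometry x w + (x \<bullet> z) *\<^sub>R x"
proof -
  have "x \<noteq> 0"
    using x by auto
  have "x \<bullet> (z - (x \<bullet> z) *\<^sub>R x) = 0"
    using x by (simp add: inner_diff_right power2_norm_eq_inner[symmetric])
  then have "z - (x \<bullet> z) *\<^sub>R x \<in> range (perp_isometry x :: 'm \<Rightarrow> 'n)"
    using perp_isometry_spec(3)[OF \<open>x \<noteq> 0\<close> dims] by simp
  then obtain w :: 'm where "perp_isometry x w = z - (x \<bullet> z) *\<^sub>R x"
    by (metis rangeE)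
  then show thesis
    by (intro that[of w]) simp
qed

lemma perp_isometry_left_inverse:
  fixes x :: "'n::euclidean_space"
  assumes x: "norm x = 1" and dims: "DIM('n) = DIM('m::euclidean_space) + 1"
  shows "\<exists>\<Psi> :: 'n \<Rightarrow> 'm \<times> real. linear \<Psi> \<and> (\<forall>w a. \<Psi> (perp_isometry x w + a *\<^sub>R x) = (w, a))"
proof -
  let ?f = "perp_isometry x :: 'm \<Rightarrow> 'n"
  define \<Phi> where "\<Phi> = (\<lambda>(w, a). ?f w + a *\<^sub>R x)"
  have "x \<noteq> 0"
    using x by auto
  note f = perp_isometry_spec[OF this dims]
  have lin: "linear \<Phi>"
    unfolding \<Phi>_def
    by (rule linearI) (auto simp: linear_add[OF f(1)] linear_scale[OF f(1)] algebra_simps)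
  have "inj \<Phi>"
    unfolding linear_injective_0[OF lin]
  proof clarify
    fix w a assume "\<Phi> (w, a) = 0"
    then have 0: "?f w + a *\<^sub>R x = 0"
      by (simp add: \<Phi>_def)
    have "x \<bullet> ?f w = 0"
      using f(3) by auto
    then have "a = x \<bullet> (?f w + a *\<^sub>R x)"
      using x by (simp add: inner_add_right power2_norm_eq_inner[symmetric])
    with 0 have "a = 0"
      by simp
    with 0 f(2)[of w] show "(w, a) = 0"
      by (simp add: zero_prod_def)
  qed
  then obtain \<Psi> where \<Psi>: "linear \<Psi>" "\<Psi> \<circ> \<Phi> = id"
    using linear_injective_left_inverse[OF lin] by blast
  have "\<Psi> (?f w + a *\<^sub>R x) = (w, a)" for w a
    using \<Psi>(2) unfolding \<Phi>_def by (metis case_prod_conv comp_apply id_apply)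
  with \<Psi>(1) show ?thesis
    by blast
qed

lemma null_sets_plane_null_fibres:
  fixes x :: "'n::euclidean_space"
  assumes K: "K \<in> sets borel" and D: "dilation_invariant K"
    and x: "norm x = 1" and dims: "DIM('n) = DIM('m::euclidean_space) + 1"
  shows "{wa :: 'm \<times> real. perp_isometry x (fst wa) + snd wa *\<^sub>R x \<in> K
            \<and> plane_null K x (perp_isometry x (fst wa))} \<in> null_sets lborel"
    (is "?T \<in> _")
proof -
  let ?f = "perp_isometry x :: 'm \<Rightarrow> 'n"
  have f: "linear ?f"
    using x by (intro perp_isometry_spec(1)[OF _ dims]) auto
  have "{wa. ?f (fst wa) + snd wa *\<^sub>R x \<in> K} \<in> sets borel"
    by (rule continuous_preimage_borel[OF _ K])
      (intro continuous_intros linear_continuous_on_compose[OF _ f])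
  moreover have "continuous_on UNIV (\<lambda>wa :: 'm \<times> real. (x, ?f (fst wa)))"
    by (intro continuous_intros linear_continuous_on_compose[OF _ f])
  note continuous_preimage_borel[OF this borel_plane_null_pairs[OF K]]
  ultimately have "{wa. ?f (fst wa) + snd wa *\<^sub>R x \<in> K} \<inter> {wa. plane_null K x (?f (fst wa))} \<in> sets borel"
    by auto
  then have T: "?T \<in> sets (lborel \<Otimes>\<^sub>M lborel)"
    unfolding lborel_prod sets_lborel by (simp add: Collect_conj_eq)
  \<comment> \<open>Fubini: each fibre over w is a null subset of the line through f w in direction x\<close>
  have "emeasure lborel (Pair w -` ?T) = 0" for w
  proof (cases "plane_null K x (?f w)")
    case True
    then show ?thesis
      using line_null_if_plane_null[OF K D plane_null_commute[OF K True]]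
      by (simp add: vimage_def)
  qed (simp add: vimage_def)
  then have "emeasure (lborel \<Otimes>\<^sub>M lborel) ?T = 0"
    by (simp add: lborel.emeasure_pair_measure_alt[OF T])
  then have "?T \<in> null_sets (lborel \<Otimes>\<^sub>M lborel)"
    using T by (rule null_setsI)
  then show ?thesis
    by (simp only: lborel_prod)
qed

lemma AE_not_plane_null:
  fixes y :: "'n::euclidean_space"
  assumes K: "K \<in> sets borel" and D: "dilation_invariant K" and "y \<noteq> 0"
    and dims: "DIM('n) = DIM('m::euclidean_space) + 1"
  shows "AE z in lborel. z \<in> K \<longrightarrow> \<not> plane_null K y z"
proof -
  define x where "x = y /\<^sub>R norm y"
  have x: "norm x = 1"
    using \<open>y \<noteq> 0\<close> by (simp add: x_def)
  let ?f = "perp_isometry x :: 'm \<Rightarrow> 'n"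
  have f: "linear ?f"
    using x by (intro perp_isometry_spec(1)[OF _ dims]) auto
  let ?T = "{wa :: 'm \<times> real. ?f (fst wa) + snd wa *\<^sub>R x \<in> K \<and> plane_null K x (?f (fst wa))}"
  have sub: "{z \<in> K. plane_null K y z} \<subseteq> (\<lambda>(w, a). ?f w + a *\<^sub>R x) ` ?T"
  proof clarify
    fix z assume "z \<in> K" "plane_null K y z"
    define a where "a = x \<bullet> z"
    obtain w where z: "z = ?f w + a *\<^sub>R x"
      by (rule perp_isometry_decomposition[OF x dims, of z, folded a_def])
    have "plane_null K x z"
      using plane_null_scaleR_left_iff[OF K, of "inverse (norm y)" y z] \<open>y \<noteq> 0\<close> \<open>plane_null K y z\<close>
      by (simp add: x_def)
    then have "plane_null K (1 *\<^sub>R x + 0 *\<^sub>R z) ((- a) *\<^sub>R x + 1 *\<^sub>R z)"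
      by (rule plane_null_change_basis[OF K]) simp
    moreover have "(- a) *\<^sub>R x + 1 *\<^sub>R z = ?f w"
      by (simp add: z)
    ultimately have "(w, a) \<in> ?T"
      using \<open>z \<in> K\<close> z by simp
    with z show "z \<in> (\<lambda>(w, a). ?f w + a *\<^sub>R x) ` ?T"
      by (intro rev_image_eqI[of "(w, a)"]) simp_all
  qed
  have lin: "linear (\<lambda>(w :: 'm, a :: real). ?f w + a *\<^sub>R x)"
    by (rule linearI) (auto simp: linear_add[OF f] linear_scale[OF f] algebra_simps)
  have B: "{z \<in> K. plane_null K y z} \<in> sets borel"
    using sets.Int[OF K borel_plane_null_slice[OF K, of y]] by (simp add: Collect_conj_eq)
  have "emeasure lborel {z \<in> K. plane_null K y z} = 0"
    using dims by (intro emeasure_lborel_eq_0_if_subset_linear_image[OF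
          null_sets_plane_null_fibres[OF K D x dims] lin _ sub B]) simp
  then have "{z \<in> K. plane_null K y z} \<in> null_sets lborel"
    by (rule null_setsI) (simp add: B)
  then show ?thesis
    by (rule eventually_mono[OF AE_not_in]) blast
qed

lemma AE_plane_null_null:
  fixes K :: "'n::euclidean_space set"
  assumes K: "K \<in> sets borel" and D: "dilation_invariant K"
    and dims: "DIM('n) = DIM('m::euclidean_space) + 1"
  shows "AE y in lborel. y \<in> K \<longrightarrow> {z. plane_null K y z} \<in> null_sets lborel"
proof -
  note pairs = borel_plane_null_pairs[OF K]
  have "{yz :: 'n \<times> 'n. snd yz \<in> K \<longrightarrow> \<not> plane_null K (fst yz) (snd yz)}
          = - ({yz. snd yz \<in> K} \<inter> {yz. plane_null K (fst yz) (snd yz)})"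
    by auto
  also have "\<dots> \<in> sets borel"
    by (intro borel_comp sets.Int pairs continuous_preimage_borel[OF _ K] continuous_intros)
  finally have P: "{yz \<in> space (lborel \<Otimes>\<^sub>M lborel). snd yz \<in> K \<longrightarrow> \<not> plane_null K (fst yz) (snd yz)}
                   \<in> sets (lborel \<Otimes>\<^sub>M lborel)"
    unfolding lborel_prod by simp
  \<comment> \<open>Fubini, together with the symmetry of \<open>plane_null\<close>, exchanges the roles of y and z\<close>
  have "AE y in lborel. AE z in lborel. z \<in> K \<longrightarrow> \<not> plane_null K y z"
    using AE_lborel_singleton[of 0] by (rule eventually_mono) (rule AE_not_plane_null[OF K D _ dims])
  then have ae: "AE z in lborel. AE y in lborel. z \<in> K \<longrightarrow> \<not> plane_null K y z"
    by (subst (asm) lborel_pair.AE_commute[OF P])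
  have "z \<in> K \<longrightarrow> {y. plane_null K z y} \<in> null_sets lborel"
    if ae_z: "AE y in lborel. z \<in> K \<longrightarrow> \<not> plane_null K y z" for z
  proof
    assume "z \<in> K"
    have "{y. plane_null K z y} \<in> sets lborel"
      using borel_plane_null_slice[OF K] by simp
    moreover have "AE y in lborel. y \<notin> {y. plane_null K z y}"
      using ae_z by (rule eventually_mono) (use \<open>z \<in> K\<close> plane_null_commute[OF K] in blast)
    ultimately show "{y. plane_null K z y} \<in> null_sets lborel"
      by (simp only: AE_iff_null_sets)
  qed
  then show ?thesis
    using ae by (rule eventually_mono[rotated])
qed

definition cone_over :: "'a::real_normed_vector set \<Rightarrow> 'a set" where
  "cone_over S = {y. y \<noteq> 0 \<and> y /\<^sub>R norm y \<in> S}"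

lemma dilation_invariant_cone_over: "dilation_invariant (cone_over S)"
  unfolding dilation_invariant_def cone_over_def by (auto simp: field_simps)

lemma zero_notin_cone_over: "0 \<notin> cone_over S"
  by (simp add: cone_over_def)

lemma unit_in_cone_over_iff: "norm y = 1 \<Longrightarrow> y \<in> cone_over S \<longleftrightarrow> y \<in> S"
  by (auto simp: cone_over_def)

lemma borel_cone_over:
  fixes S :: "'a::euclidean_space set"
  assumes "S \<in> sets borel"
  shows "cone_over S \<in> sets borel"
proof -
  have "(\<lambda>y :: 'a. y /\<^sub>R norm y) \<in> borel_measurable borel"
    by measurable
  from measurable_sets[OF this assms]
  have "- {0} \<inter> ((\<lambda>y. y /\<^sub>R norm y) -` S) \<in> sets borel"
    by auto
  then show ?thesis
    by (simp add: cone_over_def vimage_def Collect_conj_eq Compl_eq)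
qed

lemma space_sphere_measure: "space (sphere_measure :: 'a::euclidean_space measure) = sphere 0 1"
  by (simp add: sphere_measure_def space_scale_measure space_restrict_space)

lemma sets_sphere_measure:
  "sets (sphere_measure :: 'a::euclidean_space measure) = sets (restrict_space borel (sphere 0 1))"
  by (simp add: sphere_measure_def)

lemma sphere_Int_in_sets_sphere_measure:
  "S \<in> sets borel \<Longrightarrow> sphere 0 1 \<inter> S \<in> sets (sphere_measure :: 'a::euclidean_space measure)"
  by (simp add: sets_sphere_measure sets_restrict_space_iff)

lemma emeasure_sphere_measure:
  fixes S :: "'a::euclidean_space set"
  assumes S: "S \<in> sets borel"
  shows "emeasure sphere_measure (sphere 0 1 \<inter> S)
           = of_nat DIM('a) * emeasure lborel (cball 0 1 \<inter> cone_over S)"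
proof -
  let ?D = "cball (0::'a) 1 - {0}"
  have "(\<lambda>z :: 'a. z /\<^sub>R norm z) \<in> restrict_space lborel ?D \<rightarrow>\<^sub>M restrict_space borel (sphere 0 1)"
    by (intro measurable_restrict_space2 measurable_restrict_space1)
      (auto simp: space_restrict_space measurable_lborel1)
  then have "emeasure sphere_measure (sphere 0 1 \<inter> S) = of_nat DIM('a) *
      emeasure (restrict_space lborel ?D) ((\<lambda>z. z /\<^sub>R norm z) -` (sphere 0 1 \<inter> S) \<inter> ?D)"
    using S by (simp add: sphere_measure_def emeasure_distr sets_restrict_space_iff space_restrict_space)
  also have "(\<lambda>z :: 'a. z /\<^sub>R norm z) -` (sphere 0 1 \<inter> S) \<inter> ?D = cball 0 1 \<inter> cone_over S"
    by (auto simp: cone_over_def)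
  also have "emeasure (restrict_space lborel ?D) (cball 0 1 \<inter> cone_over S)
               = emeasure lborel (cball 0 1 \<inter> cone_over S)"
    by (rule emeasure_restrict_space) (auto simp: cone_over_def)
  finally show ?thesis .
qed

lemma null_sets_sphere_measureI:
  fixes S :: "'a::euclidean_space set"
  assumes "S \<in> sets borel" and "cone_over S \<in> null_sets lborel"
  shows "sphere 0 1 \<inter> S \<in> null_sets sphere_measure"
proof -
  have "emeasure lborel (cball 0 1 \<inter> cone_over S) \<le> emeasure lborel (cone_over S)"
    using assms(2) by (intro emeasure_mono) auto
  with null_setsD1[OF assms(2)] have "emeasure lborel (cball 0 1 \<inter> cone_over S) = 0"
    by simp
  then show ?thesis
    using assms(1) by (intro null_setsI sphere_Int_in_sets_sphere_measure)
      (simp add: emeasure_sphere_measure)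
qed

lemma sphere_volume_pos: "sphere_volume TYPE('a::euclidean_space) > 0"
proof -
  have "emeasure sphere_measure (sphere (0::'a) 1)
          = of_nat DIM('a) * emeasure lborel (cball (0::'a) 1 \<inter> cone_over UNIV)"
    using emeasure_sphere_measure[of UNIV] by simp
  also have "cball (0::'a) 1 \<inter> cone_over UNIV = cball 0 1 - {0}"
    by (auto simp: cone_over_def)
  also have "emeasure lborel (cball (0::'a) 1 - {0}) = emeasure lborel (cball (0::'a) 1)"
    by (rule emeasure_Diff_null_set) auto
  also have "\<dots> = ennreal (measure lborel (cball (0::'a) 1))"
    using emeasure_lborel_cball_finite[of "0::'a" 1] by (simp add: emeasure_eq_ennreal_measure)
  finally have "emeasure sphere_measure (sphere (0::'a) 1)
                  = ennreal (of_nat DIM('a) * measure lborel (cball (0::'a) 1))"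
    by (simp add: ennreal_mult ennreal_of_nat_eq_real_of_nat)
  then have "sphere_volume TYPE('a) = of_nat DIM('a) * measure lborel (cball (0::'a) 1)"
    unfolding sphere_volume_def by (simp add: measure_def)
  moreover have "measure lborel (ball (0::'a) 1) \<le> measure lborel (cball (0::'a) 1)"
    using emeasure_lborel_cball_finite[of "0::'a" 1]
    by (intro measure_mono_fmeasurable) (auto simp: ball_subset_cball fmeasurable_def)
  then have "0 < measure lborel (cball (0::'a) 1)"
    using content_ball_pos[of 1 "0::'a"] by simp
  ultimately show ?thesis
    by simp
qed

lemma measure_distr_eq_measure_space:
  assumes f: "f \<in> measurable M N" and A: "A \<in> sets N"
    and null: "{v \<in> space M. f v \<notin> A} \<in> null_sets M"
  shows "measure (distr M N f) A = measure M (space M)"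
proof -
  have "measure (distr M N f) A = measure M (f -` A \<inter> space M)"
    by (rule measure_distr[OF f A])
  also have "\<dots> = measure M (space M)"
    using AE_not_in[OF null] measurable_sets[OF f A] by (intro measure_eq_AE) auto
  finally show ?thesis .
qed

lemma borel_sphere_superlevel:
  fixes p :: "'a::euclidean_space \<Rightarrow> real"
  assumes "p \<in> borel_measurable (restrict_space borel (sphere 0 1))"
  shows "{y \<in> sphere 0 1. t < p y} \<in> sets borel"
proof -
  have "p -` {t <..} \<inter> sphere 0 1 \<in> sets (restrict_space borel (sphere (0::'a) 1))"
    using measurable_sets[OF assms, of "{t <..}"] by (simp add: space_restrict_space)
  moreover have "{y \<in> sphere 0 1. t < p y} = p -` {t <..} \<inter> sphere 0 1"
    by auto
  ultimately show ?thesis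
    by (simp add: sets_restrict_space_iff)
qed

lemma norm_great_circle:
  fixes x v :: "'a::real_inner"
  assumes "norm x = 1" "norm v = 1" "x \<bullet> v = 0"
  shows "norm (great_circle x v \<theta>) = 1"
proof -
  have "x \<bullet> x = 1" "v \<bullet> v = 1"
    using assms(1,2) by (simp_all add: power2_norm_eq_inner[symmetric])
  then have "great_circle x v \<theta> \<bullet> great_circle x v \<theta> = (cos \<theta>)\<^sup>2 + (sin \<theta>)\<^sup>2"
    using assms(3) by (simp add: great_circle_def inner_add_left inner_add_right inner_commute power2_eq_square)
  then show ?thesis
    by (simp add: norm_eq_1)
qed

lemma borel_Lset:
  fixes p :: "'a::euclidean_space \<Rightarrow> real"
  assumes meas: "p \<in> borel_measurable (restrict_space borel (sphere 0 1))"
    and "norm x = 1" "norm v = 1" "x \<bullet> v = 0"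
  shows "Lset p x v t \<in> sets borel"
proof -
  have "Lset p x v t = {0..<2*pi} \<inter> {\<theta>. great_circle x v \<theta> \<in> {y \<in> sphere 0 1. t < p y}}"
    using norm_great_circle[OF assms(2-4)] by (auto simp: Lset_def)
  also have "\<dots> \<in> sets borel"
    by (intro sets.Int continuous_preimage_borel[OF _ borel_sphere_superlevel[OF meas]])
      (auto simp: great_circle_def intro!: continuous_intros)
  finally show ?thesis .
qed

lemma borel_Vset:
  fixes p :: "'a::euclidean_space \<Rightarrow> real"
  assumes meas: "p \<in> borel_measurable (restrict_space borel (sphere 0 1))" and x: "norm x = 1"
  shows "Vset p x t \<in> sets borel"
proof -
  let ?Q = "{v\<theta> :: 'a \<times> real. snd v\<theta> \<in> {0..<2*pi}}
              \<inter> {v\<theta>. great_circle x (fst v\<theta>) (snd v\<theta>) \<in> {y \<in> sphere 0 1. t < p y}}"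
  have "{v\<theta> :: 'a \<times> real. snd v\<theta> \<in> {0..<2*pi}} \<in> sets borel"
    by (rule continuous_preimage_borel) (simp_all add: continuous_on_snd[OF continuous_on_id])
  moreover have "continuous_on UNIV (\<lambda>v\<theta> :: 'a \<times> real. great_circle x (fst v\<theta>) (snd v\<theta>))"
    unfolding great_circle_def by (intro continuous_intros)
  note continuous_preimage_borel[OF this borel_sphere_superlevel[OF meas]]
  ultimately have "?Q \<in> sets (borel \<Otimes>\<^sub>M lborel)"
    unfolding sets_borel_pair_lborel by (rule sets.Int)
  from measurable_sets[OF lborel.measurable_emeasure_Pair[OF this] borel_open[OF open_greaterThan]]
  have positive: "{v. 0 < emeasure lborel (Pair v -` ?Q)} \<in> sets borel"
    by (simp only: vimage_def space_borel Int_UNIV_right greaterThan_iff)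
  have slice: "Pair v -` ?Q = Lset p x v t" if "v \<in> sphere 0 1" "x \<bullet> v = 0" for v
  proof -
    have "great_circle x v \<theta> \<in> sphere 0 1" for \<theta>
      using norm_great_circle[OF x _ that(2), of \<theta>] that(1) by simp
    then show ?thesis
      by (auto simp: Lset_def)
  qed
  have "v \<in> Vset p x t \<longleftrightarrow> v \<in> sphere 0 1 \<inter> {v. x \<bullet> v = 0} \<inter> {v. 0 < emeasure lborel (Pair v -` ?Q)}"
    for v
  proof (cases "v \<in> sphere 0 1 \<and> x \<bullet> v = 0")
    case True
    then show ?thesis
      using slice[of v] by (simp only: Vset_def mem_Collect_eq Int_iff) blast
  qed (auto simp: Vset_def)
  then have "Vset p x t = sphere 0 1 \<inter> {v. x \<bullet> v = 0} \<inter> {v. 0 < emeasure lborel (Pair v -` ?Q)}"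
    by blast
  also have "\<dots> \<in> sets borel"
    by (intro sets.Int borel_closed closed_sphere closed_hyperplane positive)
  finally show ?thesis .
qed

lemma in_Vset_if_not_plane_null:
  fixes p :: "'a::euclidean_space \<Rightarrow> real"
  assumes meas: "p \<in> borel_measurable (restrict_space borel (sphere 0 1))"
    and x: "norm x = 1" and v: "norm v = 1" "x \<bullet> v = 0" and "t \<le> t'"
    and N: "\<not> plane_null (cone_over {y \<in> sphere 0 1. t' < p y}) x v"
  shows "v \<in> Vset p x t"
proof (rule ccontr)
  let ?K = "cone_over {y \<in> sphere 0 1. t' < p y}"
  let ?A = "{\<theta> \<in> {0..<2*pi}. cos \<theta> *\<^sub>R x + sin \<theta> *\<^sub>R v \<in> ?K}"
  assume "v \<notin> Vset p x t"
  then have "emeasure lborel (Lset p x v t) = 0"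
    using v by (simp add: Vset_def)
  moreover have "norm (cos \<theta> *\<^sub>R x + sin \<theta> *\<^sub>R v) = 1" for \<theta>
    using norm_great_circle[OF x v, of \<theta>] by (simp add: great_circle_def)
  then have "?A \<subseteq> Lset p x v t"
    using \<open>t \<le> t'\<close> by (auto simp: Lset_def great_circle_def unit_in_cone_over_iff)
  ultimately have "emeasure lborel ?A = 0"
    using emeasure_mono[of ?A "Lset p x v t" lborel] borel_Lset[OF meas x v] by simp
  then have "plane_null ?K x v"
    by (intro plane_null_if_arc_null borel_cone_over borel_sphere_superlevel[OF meas]
        dilation_invariant_cone_over zero_notin_cone_over)
  with N show False ..
qed

lemma null_sets_plane_null_perp:
  fixes K :: "'n::euclidean_space set" and x :: 'n
  assumes K: "K \<in> sets borel" and x: "norm x = 1"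
    and dims: "DIM('n) = DIM('m::euclidean_space) + 1"
    and N: "{z. plane_null K x z} \<in> null_sets lborel"
  shows "{w :: 'm. plane_null K x (perp_isometry x w)} \<in> null_sets lborel"
    (is "?S \<in> _")
proof -
  let ?f = "perp_isometry x :: 'm \<Rightarrow> 'n"
  have f: "linear ?f"
    using x by (intro perp_isometry_spec(1)[OF _ dims]) auto
  obtain \<Psi> :: "'n \<Rightarrow> 'm \<times> real" where \<Psi>: "linear \<Psi>" "\<And>w a. \<Psi> (?f w + a *\<^sub>R x) = (w, a)"
    using perp_isometry_left_inverse[OF x dims] by blast
  have "continuous_on UNIV (\<lambda>w. (x, ?f w))"
    by (intro continuous_intros linear_continuous_on_compose[OF _ f])
  from continuous_preimage_borel[OF this borel_plane_null_pairs[OF K]]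
  have S: "?S \<in> sets borel"
    by simp
  \<comment> \<open>the plane through x and f w contains f w + a x\<close>
  have "?S \<times> {0..1} \<subseteq> \<Psi> ` {z. plane_null K x z}"
  proof clarify
    fix w and a :: real assume "plane_null K x (?f w)"
    then have "plane_null K (1 *\<^sub>R x + 0 *\<^sub>R ?f w) (a *\<^sub>R x + 1 *\<^sub>R ?f w)"
      by (rule plane_null_change_basis[OF K]) simp
    then have "plane_null K x (?f w + a *\<^sub>R x)"
      by (simp add: add.commute)
    then show "(w, a) \<in> \<Psi> ` {z. plane_null K x z}"
      by (intro rev_image_eqI[of "?f w + a *\<^sub>R x"]) (simp_all add: \<Psi>(2))
  qed
  then have "emeasure lborel (?S \<times> {0..1::real}) = 0"
    using S dims by (intro emeasure_lborel_eq_0_if_subset_linear_image[OF N \<Psi>(1)])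
      (auto simp: sets_borel_pair_lborel[symmetric] lborel_prod[symmetric])
  then have "emeasure lborel ?S = 0"
    using lborel.emeasure_pair_measure_Times[of ?S lborel "{0..1::real}"] S
    by (simp add: lborel_prod)
  with S show ?thesis
    by (auto intro: null_setsI)
qed

lemma null_sets_sphere_plane_null_perp:
  fixes K :: "'n::euclidean_space set" and x :: 'n
  assumes K: "K \<in> sets borel" and x: "norm x = 1"
    and dims: "DIM('n) = DIM('m::euclidean_space) + 1"
    and N: "{z. plane_null K x z} \<in> null_sets lborel"
  shows "{v \<in> sphere 0 1. plane_null K x (perp_isometry x v)} \<in> null_sets (sphere_measure :: 'm measure)"
proof -
  let ?f = "perp_isometry x :: 'm \<Rightarrow> 'n"
  let ?S = "{w. plane_null K x (?f w)}"
  note S_null = null_sets_plane_null_perp[OF K x dims N]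
  then have S: "?S \<in> sets borel"
    by auto
  have f: "linear ?f"
    using x by (intro perp_isometry_spec(1)[OF _ dims]) auto
  have "cone_over ?S \<subseteq> ?S"
  proof
    fix y assume "y \<in> cone_over ?S"
    then have "y \<noteq> 0" "plane_null K x (inverse (norm y) *\<^sub>R ?f y)"
      by (auto simp: cone_over_def linear_scale[OF f])
    then show "y \<in> ?S"
      using plane_null_scaleR_right_iff[OF K] by simp
  qed
  then have "cone_over ?S \<in> null_sets lborel"
    by (intro null_sets_subset[OF S_null]) (auto intro: borel_cone_over[OF S])
  moreover have "{v \<in> sphere 0 1. plane_null K x (?f v)} = sphere 0 1 \<inter> ?S"
    by auto
  ultimately show ?thesis
    using null_sets_sphere_measureI[OF S] by simp
qed

lemma borel_measurable_perp_isometry: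
  fixes x :: "'n::euclidean_space"
  assumes "x \<noteq> 0" and "DIM('n) = DIM('m::euclidean_space) + 1"
  shows "(perp_isometry x :: 'm \<Rightarrow> 'n) \<in> borel_measurable sphere_measure"
proof -
  have "(perp_isometry x :: 'm \<Rightarrow> 'n) \<in> borel_measurable (restrict_space borel (sphere 0 1))"
    using perp_isometry_spec(1)[OF assms]
    by (intro measurable_restrict_space1 borel_measurable_continuous_onI linear_continuous_on)
      (simp add: linear_conv_bounded_linear)
  then show ?thesis
    by (simp add: measurable_cong_sets[OF sets_sphere_measure refl])
qed

lemma measure_Vset_eq_sphere_volume:
  fixes p :: "'n::euclidean_space \<Rightarrow> real" and x :: 'n
  assumes meas: "p \<in> borel_measurable (restrict_space borel (sphere 0 1))"
    and dims: "DIM('n) = DIM('m::euclidean_space) + 1"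
    and x: "norm x = 1" and "t \<le> t'"
    and N: "{z. plane_null (cone_over {y \<in> sphere 0 1. t' < p y}) x z} \<in> null_sets lborel"
  shows "measure (perp_sphere_measure TYPE('m) x) (Vset p x t) = sphere_volume TYPE('m)"
proof -
  let ?f = "perp_isometry x :: 'm \<Rightarrow> 'n"
  have "x \<noteq> 0"
    using x by auto
  note f = perp_isometry_spec[OF this dims]
  note f_meas = borel_measurable_perp_isometry[OF \<open>x \<noteq> 0\<close> dims]
  have sub: "{v \<in> space sphere_measure. ?f v \<notin> Vset p x t}
          \<subseteq> {v \<in> sphere 0 1. plane_null (cone_over {y \<in> sphere 0 1. t' < p y}) x (?f v)}"
  proof
    fix v assume "v \<in> {v \<in> space sphere_measure. ?f v \<notin> Vset p x t}"
    then have "norm v = 1" "?f v \<notin> Vset p x t"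
      by (auto simp: space_sphere_measure)
    moreover have "norm (?f v) = 1" "x \<bullet> ?f v = 0"
      using f(2,3) \<open>norm v = 1\<close> by auto
    ultimately show "v \<in> {v \<in> sphere 0 1. plane_null (cone_over {y \<in> sphere 0 1. t' < p y}) x (?f v)}"
      using in_Vset_if_not_plane_null[OF meas x _ _ \<open>t \<le> t'\<close>] by auto
  qed
  have "{v \<in> space sphere_measure. ?f v \<notin> Vset p x t}
          = space sphere_measure - (?f -` Vset p x t \<inter> space sphere_measure)"
    by auto
  also have "\<dots> \<in> sets sphere_measure"
    by (intro sets.Diff sets.top measurable_sets[OF f_meas borel_Vset[OF meas x]])
  finally have "{v \<in> space sphere_measure. ?f v \<notin> Vset p x t} \<in> null_sets sphere_measure"
    using null_sets_sphere_plane_null_perp[OF borel_cone_over[OF borel_sphere_superlevel[OF meas]] x dims N]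
    by (intro null_sets_subset[OF _ _ sub])
  then show ?thesis
    unfolding perp_sphere_measure_def sphere_volume_def
    using measure_distr_eq_measure_space[OF f_meas borel_Vset[OF meas x]]
    by (simp add: space_sphere_measure)
qed

lemma AE_plane_null_superlevel:
  fixes p :: "'n::euclidean_space \<Rightarrow> real"
  assumes meas: "p \<in> borel_measurable (restrict_space borel (sphere 0 1))"
    and dims: "DIM('n) = DIM('m::euclidean_space) + 1"
  shows "AE x in sphere_measure.
           t < p x \<longrightarrow> {z. plane_null (cone_over {y \<in> sphere 0 1. t < p y}) x z} \<in> null_sets lborel"
proof -
  let ?U = "{y \<in> sphere 0 1. t < p y}"
  define K where "K = cone_over ?U"
  let ?B = "{y. {z. plane_null K y z} \<notin> null_sets lborel}"
  have U: "?U \<in> sets borel"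
    by (rule borel_sphere_superlevel[OF meas])
  then have K: "K \<in> sets borel"
    unfolding K_def by (rule borel_cone_over)
  note B = borel_plane_null_non_null[OF K]
  have sub: "cone_over (?U \<inter> ?B) \<subseteq> K \<inter> ?B"
  proof
    fix y assume "y \<in> cone_over (?U \<inter> ?B)"
    then have "y \<noteq> 0" "y /\<^sub>R norm y \<in> ?U" "{z. plane_null K (inverse (norm y) *\<^sub>R y) z} \<notin> null_sets lborel"
      by (simp_all add: cone_over_def)
    then show "y \<in> K \<inter> ?B"
      using plane_null_scaleR_left_iff[OF K, of "inverse (norm y)" y]
      by (simp add: K_def cone_over_def)
  qed
  have null: "K \<inter> ?B \<in> null_sets lborel"
  proof -
    have "dilation_invariant K"
      by (simp add: K_def dilation_invariant_cone_over)
    from AE_plane_null_null[OF K this dims]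
    have "AE y in lborel. y \<notin> K \<inter> ?B"
      by (rule eventually_mono) blast
    with sets.Int[OF K B] show ?thesis
      by (subst AE_iff_null_sets) simp_all
  qed
  have "cone_over (?U \<inter> ?B) \<in> null_sets lborel"
    using null_sets_subset[OF null _ sub] borel_cone_over[OF sets.Int[OF U B]] by simp
  from null_sets_sphere_measureI[OF sets.Int[OF U B] this]
  have "AE x in sphere_measure. x \<notin> sphere 0 1 \<inter> (?U \<inter> ?B)"
    by (rule AE_not_in)
  moreover note AE_space[of "sphere_measure :: 'n measure", unfolded space_sphere_measure]
  ultimately show ?thesis
    unfolding K_def[symmetric] by eventually_elim blast
qed

lemma measure_Vset_eq_sphere_volume_below:
  fixes p :: "'n::euclidean_space \<Rightarrow> real" and x :: 'n
  assumes meas: "p \<in> borel_measurable (restrict_space borel (sphere 0 1))"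
    and dims: "DIM('n) = DIM('m::euclidean_space) + 1"
    and "t < p x"
    and N: "\<forall>r :: rat. of_rat r < p x \<longrightarrow>
              {z. plane_null (cone_over {y \<in> sphere 0 1. of_rat r < p y}) x z} \<in> null_sets lborel"
    and x: "x \<in> sphere 0 1"
  shows "measure (perp_sphere_measure TYPE('m) x) (Vset p x t) = sphere_volume TYPE('m)"
proof -
  obtain r :: rat where r: "t < of_rat r" "of_rat r < p x"
    using of_rat_dense[OF \<open>t < p x\<close>] by blast
  with N have "{z. plane_null (cone_over {y \<in> sphere 0 1. of_rat r < p y}) x z} \<in> null_sets lborel"
    by blast
  then show ?thesis
    using x r(1) by (intro measure_Vset_eq_sphere_volume[OF meas dims]) auto
qed

theorem mainTheorem6:
  fixes p :: "'n::euclidean_space \<Rightarrow> real"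
    and dummy :: "'m::euclidean_space itself"
  assumes dim3: "DIM('n) \<ge> 3"
    and dimm: "DIM('n) = DIM('m) + 1"
    and meas: "p \<in> borel_measurable (restrict_space borel (sphere (0::'n) 1))"
    and pos: "\<And>y. y \<in> sphere 0 1 \<Longrightarrow> p y > 0"
    and int_pos: "(\<integral>\<^sup>+ y. ennreal (p y) \<partial>(sphere_measure :: 'n measure)) > 0"
    and int_fin: "(\<integral>\<^sup>+ y. ennreal (p y) \<partial>(sphere_measure :: 'n measure)) < \<infinity>"
  shows "AE x in (sphere_measure :: 'n measure).
           (1 / p x) * measure lborel
              {t. 0 < t \<and> t < p x
                  \<and> ereal t < esssup (sphere_measure :: 'n measure) (\<lambda>y. ereal (p y))
                  \<and> measure (perp_sphere_measure TYPE('m) x) (Vset p x t)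
                      / sphere_volume TYPE('m) = 1} = 1"
proof -
  have "AE x in sphere_measure. \<forall>r :: rat. of_rat r < p x \<longrightarrow>
          {z. plane_null (cone_over {y \<in> sphere 0 1. of_rat r < p y}) x z} \<in> null_sets lborel"
    unfolding AE_all_countable using AE_plane_null_superlevel[OF meas dimm] by blast
  moreover have "AE x in sphere_measure. ereal (p x) \<le> esssup sphere_measure (\<lambda>y. ereal (p y))"
    by (rule esssup_AE)
  moreover note AE_space[of "sphere_measure :: 'n measure", unfolded space_sphere_measure]
  ultimately show ?thesis
  proof eventually_elim
    case (elim x)
    have "{t. 0 < t \<and> t < p x \<and> ereal t < esssup sphere_measure (\<lambda>y. ereal (p y))
              \<and> measure (perp_sphere_measure TYPE('m) x) (Vset p x t) / sphere_volume TYPE('m) = 1}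
          = {0 <..< p x}" (is "?A = _")
    proof (intro set_eqI iffI)
      fix t assume "t \<in> {0 <..< p x}"
      then have "0 < t" "t < p x"
        by auto
      moreover from \<open>t < p x\<close> have "ereal t < esssup sphere_measure (\<lambda>y. ereal (p y))"
        using elim(2) by (simp add: less_le_trans[of _ "ereal (p x)"])
      moreover from \<open>t < p x\<close> have "measure (perp_sphere_measure TYPE('m) x) (Vset p x t) = sphere_volume TYPE('m)"
        using elim(1,3) by (rule measure_Vset_eq_sphere_volume_below[OF meas dimm])
      ultimately show "t \<in> ?A"
        using sphere_volume_pos[where 'a = 'm] by simp
    qed simp
    then show ?case
      using pos[OF elim(3)] by simp
  qed
qed

end
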